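(* Let $f,g:\mathbb{R}^n\to\mathbb{R}^+$ be log-concave functions and $\lambda\in(0,1)$. Then \[ \int_{\mathbb{R}^n}\Delta_\lambda^{f,g}\;\int_{\mathbb{R}^n} f^{\lambda}g^{1-\lambda}\le \int_{\mathbb{R}^n}f\int_{\mathbb{R}^n}g. \]
   Context: For $\lambda\in(0,1)$ and $f,g:\mathbb{R}^n\to\mathbb{R}^+$, the $\lambda$-difference function $\Delta_\lambda^{f,g}:\mathbb{R}^n\to\mathbb{R}^+$ is defined by \[ \Delta_\lambda^{f,g}(z)=\sup_{(1-\lambda)x+\lambda y=z} f^{1-\lambda}\!\left(\tfrac{x}{1-\lambda}\right)g^{\lambda}\!\left(\tfrac{-y}{\lambda}\right). \] A function $f\ge0$ is log-concave if $f=e^{-\varphi}$ for a convex $\varphi:\mathbb{R}^n\to\mathbb{R}\cup\{+\infty\}$. *)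

theory Defs
  imports "HOL-Analysis.Analysis"
begin

definition log_concave :: "('a::real_vector \<Rightarrow> real) \<Rightarrow> bool" where
  "log_concave f \<longleftrightarrow> (\<exists>\<phi> :: 'a \<Rightarrow> ereal.
      (\<forall>x. \<phi> x \<noteq> -\<infinity>) \<and>
      (\<forall>x y t. 0 < t \<and> t < 1 \<longrightarrow>
         \<phi> ((1 - t) *\<^sub>R x + t *\<^sub>R y) \<le> ereal (1 - t) * \<phi> x + ereal t * \<phi> y) \<and>
      (\<forall>x. f x = (if \<phi> x = \<infinity> then 0 else exp (- real_of_ereal (\<phi> x)))))"

text \<open>The lambda-difference function, valued in [0,infinity] (the supremum may be infinite).\<close>
definition diff_fun :: "real \<Rightarrow> ('a::real_vector \<Rightarrow> real) \<Rightarrow> ('a \<Rightarrow> real) \<Rightarrow> 'a \<Rightarrow> ennreal" where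
  "diff_fun l f g z = (SUP p \<in> {(x, y). (1 - l) *\<^sub>R x + l *\<^sub>R y = z}.
      ennreal (f ((1 / (1 - l)) *\<^sub>R fst p) powr (1 - l) * g ((- 1 / l) *\<^sub>R snd p) powr l))"

end

theory Submission
  imports Defs
begin

text \<open>Fix a decomposition \<open>z = (1 - l) x + l y\<close> and put \<open>a = x / (1 - l)\<close>, \<open>b = - y / l\<close>.
  Log-concavity of \<open>f\<close> and \<open>g\<close> gives, for every \<open>w\<close> and \<open>t = w + x - y\<close>,
  \<open>f(a) powr (1 - l) * g(b) powr l * f(w) powr l * g(w) powr (1 - l) \<le> f(l t + z) * g((1 - l) t - z)\<close>.
  Integrating in \<open>w\<close> and taking the supremum over all decompositions of \<open>z\<close> bounds
  \<open>\<Delta>(z) * \<integral> f powr l * g powr (1 - l)\<close> by \<open>\<integral> f(l t + z) * g((1 - l) t - z) dt\<close>.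
  Integrating in \<open>z\<close>, the linear map \<open>(t, z) \<mapsto> (l t + z, (1 - l) t - z)\<close> has determinant
  \<open>-1\<close>, so the right-hand side becomes \<open>\<integral> f * \<integral> g\<close>. Since \<open>f\<close> and \<open>g\<close> are only Lebesgue
  measurable, this change of variables is carried out for Borel majorants with the same integrals.\<close>

lemma log_concave_nonneg:
  assumes "log_concave f"
  shows "0 \<le> f x"
  using assms unfolding log_concave_def by auto

lemma log_concave_powr_le:
  assumes "log_concave f" "0 < t" "t < 1"
  shows "f x powr (1 - t) * f y powr t \<le> f ((1 - t) *\<^sub>R x + t *\<^sub>R y)"
proof -
  obtain \<phi> :: "'a \<Rightarrow> ereal" where ninf: "\<And>x. \<phi> x \<noteq> -\<infinity>"
    and convex: "\<And>x y t. 0 < t \<Longrightarrow> t < 1 \<Longrightarrow>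
       \<phi> ((1 - t) *\<^sub>R x + t *\<^sub>R y) \<le> ereal (1 - t) * \<phi> x + ereal t * \<phi> y"
    and f_eq: "\<And>x. f x = (if \<phi> x = \<infinity> then 0 else exp (- real_of_ereal (\<phi> x)))"
    using assms(1) unfolding log_concave_def by blast
  let ?m = "(1 - t) *\<^sub>R x + t *\<^sub>R y"
  show ?thesis
  proof (cases "\<phi> x = \<infinity> \<or> \<phi> y = \<infinity>")
    case True
    then show ?thesis using f_eq[of x] f_eq[of y] f_eq[of ?m] by auto
  next
    case False
    then obtain a b where ab: "\<phi> x = ereal a" "\<phi> y = ereal b"
      using ninf by (metis ereal_cases)
    have "\<phi> ?m \<le> ereal ((1 - t) * a + t * b)"
      using convex[OF assms(2,3)] ab by (metis plus_ereal.simps(1) times_ereal.simps(1))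
    then obtain c where c: "\<phi> ?m = ereal c" "c \<le> (1 - t) * a + t * b"
      using ninf by (cases "\<phi> ?m") auto
    have "f x powr (1 - t) * f y powr t = exp (-a) powr (1 - t) * exp (-b) powr t"
      using f_eq ab by simp
    also have "\<dots> = exp (- ((1 - t) * a + t * b))"
      by (simp add: powr_def exp_add[symmetric] algebra_simps)
    also have "\<dots> \<le> exp (-c)" using c(2) by simp
    also have "\<dots> = f ?m" using f_eq c(1) by simp
    finally show ?thesis .
  qed
qed

lemma convex_imp_sets_lebesgue:
  fixes S :: "'a::euclidean_space set"
  assumes "convex S"
  shows "S \<in> sets lebesgue"
proof -
  have "S - interior S \<subseteq> frontier S"
    using closure_subset by (auto simp: frontier_def)
  then have "S - interior S \<in> sets lebesgue"
    using negligible_subset negligible_convex_frontier[OF assms] negligible_imp_sets by blast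
  moreover have "interior S \<in> sets lebesgue"
    by (rule sets_completionI_sets) simp
  ultimately have "(S - interior S) \<union> interior S \<in> sets lebesgue" by (rule sets.Un)
  moreover have "(S - interior S) \<union> interior S = S" using interior_subset by blast
  ultimately show ?thesis by simp
qed

lemma log_concave_convex_superlevel:
  assumes "log_concave f"
  shows "convex {x. a < f x}"
proof (cases "a < 0")
  case True
  then have "{x. a < f x} = UNIV"
    using log_concave_nonneg[OF assms] by (auto intro: less_le_trans)
  then show ?thesis by simp
next
  case False
  show ?thesis
  proof (rule convexI)
    fix x y and u v :: real
    assume x: "x \<in> {x. a < f x}" and y: "y \<in> {x. a < f x}"
      and uv: "0 \<le> u" "0 \<le> v" "u + v = 1"
    show "u *\<^sub>R x + v *\<^sub>R y \<in> {x. a < f x}"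
    proof (cases "u = 0 \<or> v = 0")
      case True
      then show ?thesis using x y uv by auto
    next
      case uv_pos: False
      then have v: "0 < v" "v < 1" and u: "u = 1 - v" using uv by auto
      have "a = a powr (1 - v) * a powr v"
        using False by (simp add: powr_add[symmetric])
      also have "\<dots> < f x powr (1 - v) * f y powr v"
        using x y v False by (intro mult_strict_mono powr_less_mono2) auto
      also have "\<dots> \<le> f (u *\<^sub>R x + v *\<^sub>R y)"
        using log_concave_powr_le[OF assms v] u by simp
      finally show ?thesis by simp
    qed
  qed
qed

lemma log_concave_borel_measurable_lebesgue:
  fixes f :: "'a::euclidean_space \<Rightarrow> real"
  assumes "log_concave f"
  shows "f \<in> borel_measurable lebesgue"
  unfolding borel_measurable_iff_greater
  using convex_imp_sets_lebesgue[OF log_concave_convex_superlevel[OF assms]] by simp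

text \<open>No measurability hypothesis: the difference function is not known to be measurable.\<close>
lemma nn_integral_cmult_ge: "c * integral\<^sup>N M f \<le> (\<integral>\<^sup>+x. c * f x \<partial>M)"
proof -
  have "c * integral\<^sup>N M f = (SUP s\<in>{s. simple_function M s \<and> s \<le> f}. c * integral\<^sup>S M s)"
    by (simp add: nn_integral_def SUP_mult_left_ennreal)
  also have "\<dots> \<le> (\<integral>\<^sup>+x. c * f x \<partial>M)"
  proof (rule SUP_least)
    fix s assume s: "s \<in> {s. simple_function M s \<and> s \<le> f}"
    then have "simple_function M (\<lambda>x. c * s x)" by (auto intro: simple_function_mult)
    then have "c * integral\<^sup>S M s = (\<integral>\<^sup>+x. c * s x \<partial>M)"
      using s by (simp add: nn_integral_eq_simple_integral)
    also have "\<dots> \<le> (\<integral>\<^sup>+x. c * f x \<partial>M)"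
      using s by (intro nn_integral_mono) (auto simp: le_fun_def intro: mult_left_mono)
    finally show "c * integral\<^sup>S M s \<le> (\<integral>\<^sup>+x. c * f x \<partial>M)" .
  qed
  finally show ?thesis .
qed

lemma nn_integral_lborel_translate:
  fixes F :: "'a::euclidean_space \<Rightarrow> ennreal"
  assumes [measurable]: "F \<in> borel_measurable borel"
  shows "(\<integral>\<^sup>+w. F (c + w) \<partial>lborel) = integral\<^sup>N lborel F"
proof -
  have "integral\<^sup>N lborel F = integral\<^sup>N (distr lborel borel ((+) c)) F"
    by (simp add: lborel_distr_plus)
  also have "\<dots> = (\<integral>\<^sup>+w. F (c + w) \<partial>lborel)"
    by (rule nn_integral_distr) auto
  finally show ?thesis by simp
qed

lemma completion_borel_majorant:
  fixes f :: "'a \<Rightarrow> real"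
  assumes "f \<in> borel_measurable (completion M)"
  obtains A :: "'a \<Rightarrow> ennreal" where "A \<in> borel_measurable M"
    and "\<And>x. x \<in> space M \<Longrightarrow> ennreal (f x) \<le> A x"
    and "integral\<^sup>N M A = (\<integral>\<^sup>+x. ennreal (f x) \<partial>M)"
proof -
  obtain f' where f' [measurable]: "f' \<in> borel_measurable M" and ae: "AE x in M. f x = f' x"
    using completion_ex_borel_measurable_real[OF assms] by blast
  obtain N where N: "N \<in> null_sets M" "{x \<in> space M. f x \<noteq> f' x} \<subseteq> N"
    using ae by (elim AE_E) auto
  define A where "A x = (if x \<in> N then \<infinity> else ennreal (f' x))" for x
  have [measurable]: "N \<in> sets M" using N(1) by auto
  have "A \<in> borel_measurable M"
    unfolding A_def by measurable
  moreover have "ennreal (f x) \<le> A x" if "x \<in> space M" for x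
    using N(2) that by (force simp: A_def)
  moreover have "AE x in M. A x = ennreal (f x)"
    using AE_not_in[OF N(1)] ae by eventually_elim (auto simp: A_def)
  then have "integral\<^sup>N M A = (\<integral>\<^sup>+x. ennreal (f x) \<partial>M)"
    by (rule nn_integral_cong_AE)
  ultimately show thesis by (rule that)
qed

lemma nn_integral_lborel_shear_mult:
  fixes A B :: "'a::euclidean_space \<Rightarrow> ennreal"
  assumes [measurable]: "A \<in> borel_measurable borel" "B \<in> borel_measurable borel"
  shows "(\<integral>\<^sup>+z. (\<integral>\<^sup>+t. A (l *\<^sub>R t + z) * B ((1 - l) *\<^sub>R t - z) \<partial>lborel) \<partial>lborel)
     = integral\<^sup>N lborel A * integral\<^sup>N lborel B"
proof -
  have "(\<integral>\<^sup>+z. (\<integral>\<^sup>+t. A (l *\<^sub>R t + z) * B ((1 - l) *\<^sub>R t - z) \<partial>lborel) \<partial>lborel)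
     = (\<integral>\<^sup>+t. (\<integral>\<^sup>+z. A (l *\<^sub>R t + z) * B ((1 - l) *\<^sub>R t - z) \<partial>lborel) \<partial>lborel)"
    by (rule lborel_pair.Fubini'[symmetric]) measurable
  also have "\<dots> = (\<integral>\<^sup>+t. (\<integral>\<^sup>+u. A u * B (t - u) \<partial>lborel) \<partial>lborel)"
  proof (rule nn_integral_cong)
    fix t :: 'a
    have "(\<integral>\<^sup>+z. A (l *\<^sub>R t + z) * B ((1 - l) *\<^sub>R t - z) \<partial>lborel)
        = (\<integral>\<^sup>+z. (\<lambda>u. A u * B (t - u)) (l *\<^sub>R t + z) \<partial>lborel)"
      by (rule nn_integral_cong) (simp add: algebra_simps)
    also have "\<dots> = (\<integral>\<^sup>+u. A u * B (t - u) \<partial>lborel)"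
      by (rule nn_integral_lborel_translate) measurable
    finally show "(\<integral>\<^sup>+z. A (l *\<^sub>R t + z) * B ((1 - l) *\<^sub>R t - z) \<partial>lborel)
        = (\<integral>\<^sup>+u. A u * B (t - u) \<partial>lborel)" .
  qed
  also have "\<dots> = (\<integral>\<^sup>+u. (\<integral>\<^sup>+t. A u * B (t - u) \<partial>lborel) \<partial>lborel)"
    by (rule lborel_pair.Fubini') measurable
  also have "\<dots> = (\<integral>\<^sup>+u. A u * integral\<^sup>N lborel B \<partial>lborel)"
  proof (rule nn_integral_cong)
    fix u :: 'a
    have "(\<integral>\<^sup>+t. B (t - u) \<partial>lborel) = (\<integral>\<^sup>+t. B (- u + t) \<partial>lborel)"
      by simp
    also have "\<dots> = integral\<^sup>N lborel B"
      by (rule nn_integral_lborel_translate) measurable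
    finally show "(\<integral>\<^sup>+t. A u * B (t - u) \<partial>lborel) = A u * integral\<^sup>N lborel B"
      by (subst nn_integral_cmult) auto
  qed
  also have "\<dots> = integral\<^sup>N lborel A * integral\<^sup>N lborel B"
    by (rule nn_integral_multc) measurable
  finally show ?thesis .
qed

lemma log_concave_mult_le:
  assumes f: "log_concave f" and g: "log_concave g" and l: "0 < l" "l < 1"
  shows "f a powr (1 - l) * g b powr l * (f w powr l * g w powr (1 - l))
    \<le> f (l *\<^sub>R w + (1 - l) *\<^sub>R a) * g ((1 - l) *\<^sub>R w + l *\<^sub>R b)"
proof -
  have "f w powr l * f a powr (1 - l) \<le> f (l *\<^sub>R w + (1 - l) *\<^sub>R a)"
    using log_concave_powr_le[OF f, of "1 - l" w a] l by simp
  moreover have "g w powr (1 - l) * g b powr l \<le> g ((1 - l) *\<^sub>R w + l *\<^sub>R b)"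
    using log_concave_powr_le[OF g l] by simp
  ultimately have "(f w powr l * f a powr (1 - l)) * (g w powr (1 - l) * g b powr l)
      \<le> f (l *\<^sub>R w + (1 - l) *\<^sub>R a) * g ((1 - l) *\<^sub>R w + l *\<^sub>R b)"
    by (intro mult_mono) (auto simp: log_concave_nonneg[OF f])
  then show ?thesis by (simp add: algebra_simps)
qed

lemma diff_fun_mult_le:
  fixes f g :: "'a::euclidean_space \<Rightarrow> real" and A B :: "'a \<Rightarrow> ennreal"
  assumes f: "log_concave f" and g: "log_concave g" and l: "0 < l" "l < 1"
    and [measurable]: "A \<in> borel_measurable borel" "B \<in> borel_measurable borel"
    and fA: "\<And>x. ennreal (f x) \<le> A x" and gB: "\<And>x. ennreal (g x) \<le> B x"
  shows "diff_fun l f g z * (\<integral>\<^sup>+x. ennreal (f x powr l * g x powr (1 - l)) \<partial>lborel)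
     \<le> (\<integral>\<^sup>+t. A (l *\<^sub>R t + z) * B ((1 - l) *\<^sub>R t - z) \<partial>lborel)"
  unfolding diff_fun_def SUP_mult_right_ennreal
proof (rule SUP_least)
  fix p assume "p \<in> {(x, y). (1 - l) *\<^sub>R x + l *\<^sub>R y = z}"
  then obtain x y where p: "p = (x, y)" and z: "z = (1 - l) *\<^sub>R x + l *\<^sub>R y" by auto
  define a where "a = (1 / (1 - l)) *\<^sub>R x"
  define b where "b = (- 1 / l) *\<^sub>R y"
  define c where "c = f a powr (1 - l) * g b powr l"
  have "(1 - l) *\<^sub>R a = x" "l *\<^sub>R b = - y"
    using l by (simp_all add: a_def b_def)
  then have shift: "l *\<^sub>R (x - y + w) + z = l *\<^sub>R w + (1 - l) *\<^sub>R a"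
    "(1 - l) *\<^sub>R (x - y + w) - z = (1 - l) *\<^sub>R w + l *\<^sub>R b" for w
    by (simp_all add: z algebra_simps)
  have pointwise: "ennreal c * ennreal (f w powr l * g w powr (1 - l))
       \<le> A (l *\<^sub>R (x - y + w) + z) * B ((1 - l) *\<^sub>R (x - y + w) - z)" for w
  proof -
    have "ennreal c * ennreal (f w powr l * g w powr (1 - l))
        \<le> ennreal (f (l *\<^sub>R w + (1 - l) *\<^sub>R a) * g ((1 - l) *\<^sub>R w + l *\<^sub>R b))"
      unfolding c_def
      by (simp add: ennreal_mult[symmetric] ennreal_leI log_concave_mult_le[OF f g l])
    also have "\<dots> \<le> A (l *\<^sub>R w + (1 - l) *\<^sub>R a) * B ((1 - l) *\<^sub>R w + l *\<^sub>R b)"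
      using fA gB
      by (simp add: ennreal_mult log_concave_nonneg[OF f] log_concave_nonneg[OF g] mult_mono)
    finally show ?thesis by (simp only: shift)
  qed
  have "ennreal c * (\<integral>\<^sup>+w. ennreal (f w powr l * g w powr (1 - l)) \<partial>lborel)
      \<le> (\<integral>\<^sup>+w. ennreal c * ennreal (f w powr l * g w powr (1 - l)) \<partial>lborel)"
    by (rule nn_integral_cmult_ge)
  also have "\<dots> \<le> (\<integral>\<^sup>+w. (\<lambda>t. A (l *\<^sub>R t + z) * B ((1 - l) *\<^sub>R t - z)) (x - y + w) \<partial>lborel)"
    using pointwise by (intro nn_integral_mono) simp
  also have "\<dots> = (\<integral>\<^sup>+t. A (l *\<^sub>R t + z) * B ((1 - l) *\<^sub>R t - z) \<partial>lborel)"
    by (rule nn_integral_lborel_translate) measurable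
  finally show "ennreal (f ((1 / (1 - l)) *\<^sub>R fst p) powr (1 - l) * g ((- 1 / l) *\<^sub>R snd p) powr l)
      * (\<integral>\<^sup>+x. ennreal (f x powr l * g x powr (1 - l)) \<partial>lborel)
     \<le> (\<integral>\<^sup>+t. A (l *\<^sub>R t + z) * B ((1 - l) *\<^sub>R t - z) \<partial>lborel)"
    by (simp add: p c_def a_def b_def)
qed

theorem theorem1p8:
  fixes f g :: "'a::euclidean_space \<Rightarrow> real" and l :: real
  assumes "log_concave f" and "log_concave g"
    and "0 < l" and "l < 1"
  shows "(\<integral>\<^sup>+ z. diff_fun l f g z \<partial>lebesgue) *
           (\<integral>\<^sup>+ x. ennreal (f x powr l * g x powr (1 - l)) \<partial>lebesgue)
         \<le> (\<integral>\<^sup>+ x. ennreal (f x) \<partial>lebesgue) * (\<integral>\<^sup>+ x. ennreal (g x) \<partial>lebesgue)"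
proof -
  obtain A where A: "A \<in> borel_measurable borel" and fA: "\<And>x. ennreal (f x) \<le> A x"
    and int_A: "integral\<^sup>N lborel A = (\<integral>\<^sup>+x. ennreal (f x) \<partial>lborel)"
    using completion_borel_majorant[OF log_concave_borel_measurable_lebesgue[OF assms(1)]] by auto
  obtain B where B: "B \<in> borel_measurable borel" and gB: "\<And>x. ennreal (g x) \<le> B x"
    and int_B: "integral\<^sup>N lborel B = (\<integral>\<^sup>+x. ennreal (g x) \<partial>lborel)"
    using completion_borel_majorant[OF log_concave_borel_measurable_lebesgue[OF assms(2)]] by auto
  let ?I = "\<integral>\<^sup>+x. ennreal (f x powr l * g x powr (1 - l)) \<partial>lborel"
  have "(\<integral>\<^sup>+ z. diff_fun l f g z \<partial>lborel) * ?I \<le> (\<integral>\<^sup>+ z. diff_fun l f g z * ?I \<partial>lborel)"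
    using nn_integral_cmult_ge[of ?I] by (simp only: mult.commute)
  also have "\<dots> \<le> (\<integral>\<^sup>+z. (\<integral>\<^sup>+t. A (l *\<^sub>R t + z) * B ((1 - l) *\<^sub>R t - z) \<partial>lborel) \<partial>lborel)"
    using diff_fun_mult_le[OF assms A B fA gB] by (rule nn_integral_mono)
  also have "\<dots> = integral\<^sup>N lborel A * integral\<^sup>N lborel B"
    using A B by (rule nn_integral_lborel_shear_mult)
  finally show ?thesis by (simp add: nn_integral_completion int_A int_B)
qed

end
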